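(* Let $A$ be a non-negative, irreducible $d\times d$ matrix with $\rho(A)>1$, and let $M=(I-A^T)(I-A)$ and $N=(I-A)(I-A^T)$. Suppose an entrywise strictly positive matrix $X$ is a local minimum of problem (P). Then the following hold. - $X$ is a global minimum of (P). - Let $\mathbf v$ be the right leading eigenvector of $X$ with $\|\mathbf v\|=1$. Then $\mathbf v$ is an eigenvector of $M$ associated with its smallest eigenvalue $\mu$, and $\mu>0$. - The vector $\mathbf u=\frac1{\sqrt\mu}(A-I)\mathbf v$ is a non-negative left leading eigenvector of $X$ and an eigenvector of $N$ associated with its smallest eigenvalue. - $X=A-(A-I)\mathbf v\mathbf v^T$ and $\|X-A\|=\sqrt\mu$. In particular, if $M$ has no non-negative unit eigenvector $\mathbf v$ for its smallest eigenvalue $\mu$ such that $(A-I)\mathbf v\ge0$ and $A-(A-I)\mathbf v\mathbf v^T\ge0$, then (P) has no strictly positive local minimum.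
   Context: $\rho(\cdot)$ denotes spectral radius and $\|\cdot\|$ the Frobenius norm (Euclidean norm for vectors). Problem (P) for a non-negative square matrix $A$ is: minimize $\|X-A\|$ subject to $X\ge0$ (entrywise) and $\rho(X)\le1$. A local minimum of (P) is a feasible $X$ with a neighbourhood $U$ such that $\|Y-A\|\ge\|X-A\|$ for all feasible $Y\in U$. Leading eigenvectors are the non-negative eigenvectors for the eigenvalue $\rho(X)$ given by Perron–Frobenius. *)

theory Defs
  imports "HOL-Analysis.Analysis"
begin

text \<open>Matrices are real d x d matrices indexed by a finite type 'n (d = CARD('n)).
  The Frobenius norm of a matrix in real^'n^'n is the library norm (Euclidean norm
  of all entries); vectors likewise use the Euclidean norm.\<close>

fun matpow :: "real^'n^'n \<Rightarrow> nat \<Rightarrow> real^'n^'n" where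
  "matpow X 0 = mat 1"
| "matpow X (Suc k) = X ** matpow X k"

definition nonneg_mat :: "real^'n^'n \<Rightarrow> bool" where
  "nonneg_mat X \<longleftrightarrow> (\<forall>i j. X $ i $ j \<ge> 0)"

definition pos_mat :: "real^'n^'n \<Rightarrow> bool" where
  "pos_mat X \<longleftrightarrow> (\<forall>i j. X $ i $ j > 0)"

definition nonneg_vec :: "real^'n \<Rightarrow> bool" where
  "nonneg_vec v \<longleftrightarrow> (\<forall>i. v $ i \<ge> 0)"

definition irreducible_mat :: "real^'n^'n \<Rightarrow> bool" where
  "irreducible_mat X \<longleftrightarrow> (\<forall>i j. \<exists>k. matpow X k $ i $ j > 0)"

definition cmat :: "real^'n^'n \<Rightarrow> complex^'n^'n" where
  "cmat X = (\<chi> i j. complex_of_real (X $ i $ j))"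

definition is_eigenvalue :: "real^'n^'n \<Rightarrow> complex \<Rightarrow> bool" where
  "is_eigenvalue X l \<longleftrightarrow> (\<exists>v::complex^'n. v \<noteq> 0 \<and> cmat X *v v = l *s v)"

definition spectral_radius :: "real^'n^'n \<Rightarrow> real" where
  "spectral_radius X = Sup {cmod l | l. is_eigenvalue X l}"

definition feasible :: "real^'n^'n \<Rightarrow> bool" where
  "feasible X \<longleftrightarrow> nonneg_mat X \<and> spectral_radius X \<le> 1"

definition local_min :: "real^'n^'n \<Rightarrow> real^'n^'n \<Rightarrow> bool" where
  "local_min A X \<longleftrightarrow> feasible X \<and>
     (\<exists>e>0. \<forall>Y. feasible Y \<and> dist Y X < e \<longrightarrow> norm (Y - A) \<ge> norm (X - A))"

definition global_min :: "real^'n^'n \<Rightarrow> real^'n^'n \<Rightarrow> bool" where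
  "global_min A X \<longleftrightarrow> feasible X \<and> (\<forall>Y. feasible Y \<longrightarrow> norm (Y - A) \<ge> norm (X - A))"

definition right_leading_eigvec :: "real^'n^'n \<Rightarrow> real^'n \<Rightarrow> bool" where
  "right_leading_eigvec X v \<longleftrightarrow> nonneg_vec v \<and> v \<noteq> 0 \<and> X *v v = spectral_radius X *s v"

definition left_leading_eigvec :: "real^'n^'n \<Rightarrow> real^'n \<Rightarrow> bool" where
  "left_leading_eigvec X u \<longleftrightarrow> nonneg_vec u \<and> u \<noteq> 0 \<and> u v* X = spectral_radius X *s u"

definition smallest_eigenvalue :: "real^'n^'n \<Rightarrow> real \<Rightarrow> bool" where
  "smallest_eigenvalue M \<mu> \<longleftrightarrow> (\<exists>v. v \<noteq> 0 \<and> M *v v = \<mu> *s v) \<and>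
     (\<forall>l v. v \<noteq> 0 \<and> M *v v = l *s v \<longrightarrow> \<mu> \<le> l)"

definition outer :: "real^'n \<Rightarrow> real^'n \<Rightarrow> real^'n^'n" where
  "outer x y = (\<chi> i j. x $ i * y $ j)"

end

theory Submission
  imports Defs
begin

text \<open>Let X > 0 be a local minimum and v its unit Perron vector. Perturbations X + t E that keep
  v subinvariant stay feasible, and when (A - X) \<bullet> E = E \<bullet> E they move closer to A; ruling
  them out shows rho(X) = 1, that A - X is the rank-one matrix z v^T with z = (A - I) v, and
  that z \<ge> 0. The matrices A - (A - I) w w^T / |w|^2 with w near v are feasible as well, so v
  locally minimises the Rayleigh quotient |(A - I) w|^2 / |w|^2; hence it is an eigenvector of
  M = (A - I)^T (A - I) for its smallest eigenvalue mu = |z|^2, and the statements about N and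
  the left eigenvector follow by linear algebra.

  Global optimality: a feasible Y with |Y - A| < sqrt mu = sigma_min(A - I) is impossible. Along
  the path from a slightly shrunk copy of Y to A the matrix I - Z stays invertible, which
  transports a positive vector w with Z w < w to Z = A and forces rho(A) \<le> 1.\<close>

lemma outer_mult_vec: "outer a b *v c = (b \<bullet> c) *s (a::real^'n)"
  by (simp add: outer_def matrix_vector_mult_def vec_eq_iff inner_vec_def sum_distrib_left mult_ac)

lemma vec_mult_outer: "c v* outer a b = (c \<bullet> a) *s (b::real^'n)"
  by (simp add: outer_def vector_matrix_mult_def vec_eq_iff inner_vec_def sum_distrib_left mult_ac)

lemma inner_outer: "outer a b \<bullet> (F::real^'n^'n) = a \<bullet> (F *v b)"
  by (simp add: outer_def matrix_vector_mult_def inner_vec_def sum_distrib_left mult_ac)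

lemma inner_outer_outer: "outer a b \<bullet> outer c d = (a \<bullet> c) * (b \<bullet> (d::real^'n))"
  by (simp add: inner_outer outer_mult_vec scalar_mult_eq_scaleR inner_commute)

lemma norm_outer: "norm (outer a b) = norm a * norm (b::real^'n)"
proof -
  have "norm (outer a b) ^ 2 = (norm a * norm b) ^ 2"
    by (simp add: power2_norm_eq_inner inner_outer_outer power_mult_distrib)
  then show ?thesis by (simp add: power2_eq_iff_nonneg)
qed

lemma norm_matrix_vector_mult_le: "norm ((B::real^'n^'m) *v x) \<le> norm B * norm x"
proof -
  have "norm (B *v x) ^ 2 = (\<Sum>i\<in>UNIV. ((B *v x)$i) * ((B *v x)$i))"
    by (simp add: power2_norm_eq_inner inner_vec_def)
  also have "\<dots> = (\<Sum>i\<in>UNIV. (B$i \<bullet> x)^2)"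
    by (simp only: matrix_vector_mul_component power2_eq_square)
  also have "\<dots> \<le> (\<Sum>i\<in>UNIV. (B$i \<bullet> B$i) * (x \<bullet> x))"
  proof (rule sum_mono)
    fix i
    have "(B$i \<bullet> x)^2 \<le> (norm (B$i) * norm x)^2"
      by (metis Cauchy_Schwarz_ineq2 abs_ge_zero power2_abs power_mono)
    then show "(B$i \<bullet> x)^2 \<le> (B$i \<bullet> B$i) * (x \<bullet> x)"
      by (simp add: power_mult_distrib power2_norm_eq_inner)
  qed
  also have "\<dots> = (norm B * norm x)^2"
    by (simp add: power_mult_distrib power2_norm_eq_inner inner_vec_def sum_distrib_right)
  finally show ?thesis
    by (meson mult_nonneg_nonneg norm_ge_zero power2_le_imp_le)
qed

lemma pos_mat_imp_nonneg_mat: "pos_mat X \<Longrightarrow> nonneg_mat X"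
  by (auto simp: pos_mat_def nonneg_mat_def less_imp_le)

lemma is_eigenvalue_of_real:
  fixes Y :: "real^'n^'n"
  assumes "Y *v x = c *s x" "x \<noteq> 0"
  shows "is_eigenvalue Y (complex_of_real c)"
proof -
  let ?y = "(\<chi> i. complex_of_real (x$i)) :: complex^'n"
  have "(cmat Y *v ?y)$i = complex_of_real ((Y *v x)$i)" for i
    by (simp add: cmat_def matrix_vector_mult_def)
  then have "cmat Y *v ?y = complex_of_real c *s ?y"
    using assms(1) by (simp add: vec_eq_iff)
  moreover have "?y \<noteq> 0" using assms(2) by (simp add: vec_eq_iff)
  ultimately show ?thesis unfolding is_eigenvalue_def by blast
qed

lemma ex_max_index:
  fixes q :: "'n::finite \<Rightarrow> real"
  obtains i where "\<And>j. q j \<le> q i"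
proof -
  have "Max (range q) \<in> range q" by (intro Max_in) auto
  then obtain i where "q i = Max (range q)" by (metis imageE)
  moreover have "q j \<le> Max (range q)" for j by (intro Max_ge) auto
  ultimately show ?thesis using that by metis
qed

text \<open>Collatz--Wielandt: compare an eigenvector x with w at an index maximising |x i| / w i.\<close>
lemma eigenvalue_le_subinvariant:
  assumes Y: "nonneg_mat Y" and w: "\<And>i. w$i > 0" and sub: "\<And>i. (Y *v w)$i \<le> r * w$i"
    and ev: "is_eigenvalue Y l"
  shows "cmod l \<le> r"
proof -
  from ev obtain x where x: "x \<noteq> 0" "cmat Y *v x = l *s x" unfolding is_eigenvalue_def by blast
  define q where "q j = cmod (x$j) / w$j" for j
  obtain i where i: "\<And>j. q j \<le> q i" using ex_max_index by blast
  from x obtain j where "x$j \<noteq> 0" by (auto simp: vec_eq_iff)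
  then have "q j > 0" using w[of j] by (simp add: q_def)
  then have qi: "q i > 0" using i[of j] by linarith
  have "cmod l * cmod (x$i) = cmod ((cmat Y *v x)$i)"
    by (simp add: x(2) norm_mult)
  also have "\<dots> = cmod (\<Sum>j\<in>UNIV. complex_of_real (Y$i$j) * x$j)"
    by (simp add: cmat_def matrix_vector_mult_def)
  also have "\<dots> \<le> (\<Sum>j\<in>UNIV. cmod (complex_of_real (Y$i$j) * x$j))"
    by (rule norm_sum)
  also have "\<dots> = (\<Sum>j\<in>UNIV. Y$i$j * cmod (x$j))"
    using Y by (simp add: norm_mult nonneg_mat_def)
  also have "\<dots> \<le> (\<Sum>j\<in>UNIV. Y$i$j * (q i * w$j))"
  proof (rule sum_mono)
    fix j
    have "cmod (x$j) \<le> q i * w$j"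
      using i[of j] w[of j] by (simp add: q_def divide_le_eq)
    then show "Y$i$j * cmod (x$j) \<le> Y$i$j * (q i * w$j)"
      using Y by (simp add: nonneg_mat_def mult_left_mono)
  qed
  also have "\<dots> = q i * (Y *v w)$i"
    by (simp add: matrix_vector_mult_def sum_distrib_left mult_ac)
  also have "\<dots> \<le> q i * (r * w$i)"
    using sub[of i] qi by simp
  also have "\<dots> = r * cmod (x$i)"
    using w[of i] by (simp add: q_def)
  finally show ?thesis
    using qi w[of i] by (simp add: q_def zero_less_divide_iff)
qed

lemma bdd_above_eigenvalues:
  assumes Y: "nonneg_mat Y"
  shows "bdd_above {cmod l | l. is_eigenvalue Y l}"
proof -
  have row: "(Y *v 1)$i \<le> (\<Sum>i\<in>UNIV. \<Sum>j\<in>UNIV. Y$i$j) * 1$i" for i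
  proof -
    have "(Y *v 1)$i = (\<Sum>j\<in>UNIV. Y$i$j)" by (simp add: matrix_vector_mult_def)
    also have "\<dots> \<le> (\<Sum>i\<in>UNIV. \<Sum>j\<in>UNIV. Y$i$j)"
      by (rule member_le_sum) (use Y in \<open>auto simp: nonneg_mat_def intro: sum_nonneg\<close>)
    finally show ?thesis by simp
  qed
  then have "cmod l \<le> (\<Sum>i\<in>UNIV. \<Sum>j\<in>UNIV. Y$i$j)" if "is_eigenvalue Y l" for l
    using eigenvalue_le_subinvariant[OF Y _ row that] by simp
  then show ?thesis unfolding bdd_above_def by blast
qed

lemma eigenvalue_le_spectral_radius:
  "nonneg_mat Y \<Longrightarrow> is_eigenvalue Y l \<Longrightarrow> cmod l \<le> spectral_radius Y"
  unfolding spectral_radius_def by (rule cSup_upper) (auto intro: bdd_above_eigenvalues)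

definition prob_simplex :: "(real^'n) set" where
  "prob_simplex = {x. (\<forall>i. 0 \<le> x$i) \<and> sum (\<lambda>i. x$i) UNIV = 1}"

lemma compact_prob_simplex: "compact prob_simplex"
proof -
  have "prob_simplex = {x. \<forall>i. 0 \<le> x$i} \<inter> {x::real^'n. sum (\<lambda>i. x$i) UNIV = 1}"
    by (auto simp: prob_simplex_def)
  moreover have "closed {x::real^'n. sum (\<lambda>i. x$i) UNIV = 1}"
    by (intro closed_Collect_eq continuous_intros)
  ultimately have "closed (prob_simplex :: (real^'n) set)"
    using closed_positive_orthant by (metis closed_Int)
  moreover have "norm x \<le> 1" if "x \<in> prob_simplex" for x :: "real^'n"
    using norm_le_l1_cart[of x] that by (simp add: prob_simplex_def)
  then have "bounded (prob_simplex :: (real^'n) set)"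
    unfolding bounded_iff by blast
  ultimately show ?thesis by (simp add: compact_eq_bounded_closed)
qed

lemma convex_prob_simplex: "convex prob_simplex"
  unfolding convex_def prob_simplex_def
  by (auto simp: sum.distrib sum_distrib_left[symmetric])

lemma prob_simplex_nonzero: "x \<in> prob_simplex \<Longrightarrow> x \<noteq> 0"
  unfolding prob_simplex_def by auto

lemma prob_simplex_nonempty: "prob_simplex \<noteq> {}"
proof -
  have "(\<chi> i. 1 / real CARD('n)) \<in> (prob_simplex :: (real^'n) set)"
    by (simp add: prob_simplex_def)
  then show ?thesis by blast
qed

text \<open>The weak Perron--Frobenius theorem, by Brouwer's fixed point theorem applied to
  x \<mapsto> Y x / (sum of the entries of Y x) on the probability simplex.\<close>
lemma ex_nonneg_eigenvector:
  fixes Y :: "real^'n^'n"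
  assumes Y: "nonneg_mat Y"
  obtains x c where "nonneg_vec x" "x \<noteq> 0" "c \<ge> 0" "Y *v x = c *s x"
proof (cases "\<exists>x\<in>prob_simplex. Y *v x = 0")
  case True
  then obtain x where "x \<in> prob_simplex" "Y *v x = 0" by blast
  then show ?thesis
    using that[of x 0] prob_simplex_nonzero by (auto simp: prob_simplex_def nonneg_vec_def)
next
  case False
  define g where "g x = sum (\<lambda>i. (Y *v x)$i) UNIV" for x
  have Ynn: "(Y *v x)$i \<ge> 0" if "x \<in> prob_simplex" for x i
    using that Y by (auto simp: prob_simplex_def nonneg_mat_def matrix_vector_mult_def intro!: sum_nonneg)
  have gpos: "g x > 0" if "x \<in> prob_simplex" for x
  proof -
    from False that obtain i where "(Y *v x)$i \<noteq> 0" by (auto simp: vec_eq_iff)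
    then have "(Y *v x)$i > 0" using Ynn[OF that, of i] by linarith
    also have "(Y *v x)$i \<le> g x"
      unfolding g_def by (rule member_le_sum) (use Ynn[OF that] in auto)
    finally show ?thesis .
  qed
  define f where "f x = (1 / g x) *\<^sub>R (Y *v x)" for x
  have "continuous_on prob_simplex g"
    unfolding g_def by (intro continuous_intros)
  then have "continuous_on prob_simplex f"
    unfolding f_def using gpos by (intro continuous_intros) force+
  moreover have "f x \<in> prob_simplex" if x: "x \<in> prob_simplex" for x
  proof -
    have "0 \<le> f x $ i" for i using Ynn[OF x, of i] gpos[OF x] by (simp add: f_def)
    moreover have "sum (\<lambda>i. f x $ i) UNIV = 1"
      using gpos[OF x] by (simp add: f_def g_def sum_divide_distrib[symmetric])
    ultimately show ?thesis by (simp add: prob_simplex_def)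
  qed
  ultimately obtain x where x: "x \<in> prob_simplex" "f x = x"
    using brouwer[OF compact_prob_simplex convex_prob_simplex prob_simplex_nonempty, of f] by blast
  have "Y *v x = g x *s f x"
    using gpos[OF x(1)] by (simp add: f_def scalar_mult_eq_scaleR)
  then have "Y *v x = g x *s x"
    using x(2) by simp
  then show ?thesis
    using that[of x "g x"] x(1) gpos[OF x(1)] prob_simplex_nonzero
    by (auto simp: prob_simplex_def nonneg_vec_def)
qed

lemma ex_eigenvalue: "nonneg_mat Y \<Longrightarrow> \<exists>l. is_eigenvalue Y l"
  using is_eigenvalue_of_real by (blast elim: ex_nonneg_eigenvector)

lemma spectral_radius_le_subinvariant:
  assumes "nonneg_mat Y" and "\<And>i. w$i > 0" and "\<And>i. (Y *v w)$i \<le> r * w$i"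
  shows "spectral_radius Y \<le> r"
  unfolding spectral_radius_def
  using ex_eigenvalue[OF assms(1)] eigenvalue_le_subinvariant[OF assms] by (intro cSup_least) auto

lemma pos_mat_nonneg_eigenvector_pos:
  fixes X :: "real^'n^'n"
  assumes X: "pos_mat X" and v: "nonneg_vec v" "v \<noteq> 0" and ev: "X *v v = r *s v"
  shows "v$i > 0"
proof -
  from v(2) obtain j where "v$j \<noteq> 0" by (auto simp: vec_eq_iff)
  then have j: "v$j > 0" using v(1) by (auto simp: nonneg_vec_def less_le)
  have "r * v$k > 0" for k
  proof -
    have "0 < X$k$j * v$j" using X j by (simp add: pos_mat_def)
    also have "\<dots> \<le> (\<Sum>l\<in>UNIV. X$k$l * v$l)"
      using X v(1) by (intro member_le_sum) (auto simp: pos_mat_def nonneg_vec_def less_imp_le)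
    also have "\<dots> = r * v$k" using ev by (simp add: matrix_vector_mult_def vec_eq_iff)
    finally show ?thesis .
  qed
  with v(1) show "v$i > 0"
    by (metis nonneg_vec_def zero_less_mult_iff not_le)
qed

lemma pos_mat_unit_leading_eigvec:
  fixes X :: "real^'n^'n"
  assumes X: "pos_mat X"
  obtains v where "right_leading_eigvec X v" "norm v = 1"
proof -
  obtain x c where x: "nonneg_vec x" "x \<noteq> 0" "c \<ge> 0" "X *v x = c *s x"
    using ex_nonneg_eigenvector[OF pos_mat_imp_nonneg_mat[OF X]] by blast
  have "spectral_radius X \<le> c"
    using pos_mat_nonneg_eigenvector_pos[OF X x(1,2,4)] x(4)
    by (intro spectral_radius_le_subinvariant[OF pos_mat_imp_nonneg_mat[OF X]]) auto
  moreover have "c \<le> spectral_radius X"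
    using eigenvalue_le_spectral_radius[OF pos_mat_imp_nonneg_mat[OF X] is_eigenvalue_of_real[OF x(4,2)]] x(3)
    by simp
  ultimately have ev: "X *v x = spectral_radius X *s x" using x(4) by simp
  define v where "v = (1 / norm x) *s x"
  have "norm v = 1" using x(2) by (simp add: v_def scalar_mult_eq_scaleR)
  moreover have "right_leading_eigvec X v"
    using x(1,2) ev by (auto simp: right_leading_eigvec_def v_def nonneg_vec_def vector_scalar_commute)
  ultimately show ?thesis using that by blast
qed

text \<open>For a non-negative matrix Z this is equivalent to rho(Z) < 1; unlike the spectral radius it is
  easy to transport along a continuous path of matrices.\<close>
definition strictly_subinvariant :: "real^'n^'n \<Rightarrow> bool" where
  "strictly_subinvariant Z \<longleftrightarrow> (\<exists>w. (\<forall>i. w$i > 0) \<and> (\<forall>i. (Z *v w)$i < w$i))"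

lemma spectral_radius_le_1_if_strictly_subinvariant:
  "nonneg_mat Z \<Longrightarrow> strictly_subinvariant Z \<Longrightarrow> spectral_radius Z \<le> 1"
  unfolding strictly_subinvariant_def
  by (metis less_imp_le mult_1 spectral_radius_le_subinvariant)

lemma nonneg_if_strictly_subinvariant:
  fixes Z :: "real^'n^'n"
  assumes Z: "nonneg_mat Z" "strictly_subinvariant Z" and ge: "\<And>i. (x - Z *v x)$i \<ge> 0"
  shows "x$i \<ge> 0"
proof (rule ccontr)
  assume "\<not> x$i \<ge> 0"
  obtain w where w: "\<And>i. w$i > 0" "\<And>i. (Z *v w)$i < w$i"
    using Z(2) unfolding strictly_subinvariant_def by blast
  define q where "q j = - x$j / w$j" for j
  obtain k where k: "\<And>j. q j \<le> q k" using ex_max_index by blast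
  have "q i > 0" using \<open>\<not> x$i \<ge> 0\<close> w(1)[of i] by (simp add: q_def divide_neg_pos)
  then have qk: "q k > 0" using k[of i] by linarith
  have "- q k * (Z *v w)$k = (\<Sum>j\<in>UNIV. Z$k$j * (- q k * w$j))"
    by (simp add: matrix_vector_mult_def sum_distrib_left mult_ac)
  also have "\<dots> \<le> (\<Sum>j\<in>UNIV. Z$k$j * x$j)"
  proof (intro sum_mono mult_left_mono)
    fix j
    have "- x$j = q j * w$j" using w(1)[of j] by (simp add: q_def)
    also have "\<dots> \<le> q k * w$j" using k[of j] w(1)[of j] by (simp add: mult_right_mono)
    finally show "- q k * w$j \<le> x$j" by simp
    show "0 \<le> Z$k$j" using Z(1) by (simp add: nonneg_mat_def)
  qed
  also have "\<dots> = (Z *v x)$k" by (simp add: matrix_vector_mult_def)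
  finally have "(x - Z *v x)$k \<le> q k * ((Z *v w)$k - w$k)"
    using w(1)[of k] by (simp add: q_def algebra_simps)
  also have "\<dots> < 0" using qk w(2)[of k] by (simp add: mult_pos_neg)
  finally show False using ge[of k] by simp
qed

lemma continuous_on_det:
  fixes F :: "real \<Rightarrow> real^'n^'n"
  assumes "continuous_on S F"
  shows "continuous_on S (\<lambda>t. det (F t))"
  unfolding det_def by (intro continuous_intros continuous_on_component assms)

lemma continuous_on_linear_solution:
  fixes W :: "real \<Rightarrow> real^'n^'n"
  assumes cont: "continuous_on S W" and det: "\<And>t. t \<in> S \<Longrightarrow> det (W t) \<noteq> 0"
  obtains x where "continuous_on S x" "\<And>t. t \<in> S \<Longrightarrow> W t *v x t = b"
proof
  define C where "C k t = (\<chi> i j. if j = k then b$i else W t $ i $ j)" for k t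
  define x where "x t = (\<chi> k. det (C k t) / det (W t))" for t
  show "W t *v x t = b" if "t \<in> S" for t
    using cramer[OF det[OF that], of "x t" b] by (simp add: x_def C_def)
  have "continuous_on S (C k)" for k
    unfolding C_def
  proof (intro continuous_on_vec_lambda)
    fix i j
    show "continuous_on S (\<lambda>t. if j = k then b$i else W t $ i $ j)"
      by (cases "j = k") (simp_all add: continuous_on_component cont)
  qed
  then show "continuous_on S x"
    unfolding x_def using det
    by (intro continuous_on_vec_lambda continuous_on_divide continuous_on_det cont) auto
qed

text \<open>The solution x(t) of (I - Z(t)) x = 1 satisfies x = 1 + Z x, so each x(t) is either
  \<ge> 1 entrywise or has a negative entry. By continuity the first alternative, which holds at
  t = 0, persists up to t = 1, and then x(1) witnesses strict subinvariance of Z(1).\<close>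
lemma strictly_subinvariant_homotopy:
  fixes Z :: "real \<Rightarrow> real^'n^'n"
  assumes cont: "continuous_on {0..1} Z"
    and nonneg: "\<And>t. t \<in> {0..1} \<Longrightarrow> nonneg_mat (Z t)"
    and no_fixed: "\<And>t y. t \<in> {0..1} \<Longrightarrow> Z t *v y = y \<Longrightarrow> y = 0"
    and start: "strictly_subinvariant (Z 0)"
  shows "strictly_subinvariant (Z 1)"
proof -
  have "det (mat 1 - Z t) \<noteq> 0" if "t \<in> {0..1}" for t
  proof -
    have "\<forall>y. (mat 1 - Z t) *v y = 0 \<longrightarrow> y = 0"
      using no_fixed[OF that] by (auto simp: matrix_vector_mult_diff_rdistrib)
    then show ?thesis
      using matrix_left_invertible_ker invertible_left_inverse invertible_det_nz by blast
  qed
  moreover have "continuous_on {0..1} (\<lambda>t. mat 1 - Z t)"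
    by (intro continuous_on_diff continuous_on_const cont)
  ultimately obtain x where x_cont: "continuous_on {0..1} x"
    and x_sol: "\<And>t. t \<in> {0..1} \<Longrightarrow> (mat 1 - Z t) *v x t = 1"
    using continuous_on_linear_solution by blast
  have x_eq: "x t $ k = 1 + (Z t *v x t) $ k" if "t \<in> {0..1}" for t k
    using arg_cong[OF x_sol[OF that], of "\<lambda>y. y $ k"] by (simp add: matrix_vector_mult_diff_rdistrib)
  have ge_1: "x t $ k \<ge> 1" if t: "t \<in> {0..1}" and "\<And>k. x t $ k \<ge> 0" for t k
  proof -
    have "(Z t *v x t) $ k \<ge> 0"
      using nonneg[OF t] that(2) by (auto simp: matrix_vector_mult_def nonneg_mat_def intro!: sum_nonneg)
    then show ?thesis using x_eq[OF t] by simp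
  qed
  define f where "f t = (\<Sum>k\<in>UNIV. max 0 (1/2 - x t $ k))" for t
  have f_cont: "continuous_on {0..1} f"
    unfolding f_def by (intro continuous_intros continuous_on_component x_cont)
  have f_gap: "f t \<ge> 1/2" if t: "t \<in> {0..1}" and "f t \<noteq> 0" for t
  proof -
    obtain k where "max 0 (1/2 - x t $ k) \<noteq> 0"
      using \<open>f t \<noteq> 0\<close> unfolding f_def by (metis (no_types, lifting) sum.neutral)
    then have "\<not> x t $ k \<ge> 1" by (simp add: max_def split: if_splits)
    then obtain j where "x t $ j < 0" using ge_1[OF t] by (meson not_le)
    then have "1/2 \<le> max 0 (1/2 - x t $ j)" by simp
    also have "\<dots> \<le> f t" unfolding f_def by (rule member_le_sum) auto
    finally show ?thesis .
  qed
  have "x 0 $ k \<ge> 0" for k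
  proof (rule nonneg_if_strictly_subinvariant[OF nonneg start])
    show "(x 0 - Z 0 *v x 0) $ i \<ge> 0" for i
      using x_eq[of 0 i] by simp
  qed simp
  then have x0: "x 0 $ k \<ge> 1" for k
    using ge_1[of 0] by simp
  have "max 0 (1/2 - x 0 $ k) = 0" for k
    using x0[of k] by (simp add: max_def)
  then have "f 0 = 0"
    unfolding f_def by simp
  have "f 1 = 0"
  proof (rule ccontr)
    assume "f 1 \<noteq> 0"
    then have "f 1 \<ge> 1/2" using f_gap[of 1] by simp
    then obtain t where "0 \<le> t" "t \<le> 1" "f t = 1/4"
      using IVT'[of f 0 "1/4" 1] \<open>f 0 = 0\<close> f_cont by auto
    then show False using f_gap[of t] by simp
  qed
  have half: "x 1 $ k \<ge> 1/2" for k
  proof -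
    have "max 0 (1/2 - x 1 $ k) \<le> f 1"
      unfolding f_def by (rule member_le_sum) auto
    then show ?thesis using \<open>f 1 = 0\<close> by simp
  qed
  have "x 1 $ k \<ge> 0" for k
    using half[of k] by linarith
  then have "x 1 $ k \<ge> 1" for k
    using ge_1[of 1] by simp
  moreover have "(Z 1 *v x 1) $ k < x 1 $ k" for k
    using x_eq[of 1 k] by simp
  ultimately show ?thesis
    unfolding strictly_subinvariant_def by (intro exI[of _ "x 1"]) (auto intro: less_le_trans[OF zero_less_one])
qed

lemma strictly_subinvariant_scaleR:
  fixes Y :: "real^'n^'n"
  assumes Y: "nonneg_mat Y" "spectral_radius Y \<le> 1" and a: "0 \<le> a" "a < 1"
  shows "strictly_subinvariant (a *\<^sub>R Y)"
proof -
  have "strictly_subinvariant ((\<lambda>t. (t * a) *\<^sub>R Y) 1)"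
  proof (rule strictly_subinvariant_homotopy)
    show "continuous_on {0..1} (\<lambda>t. (t * a) *\<^sub>R Y)" by (intro continuous_intros)
    show "nonneg_mat ((t * a) *\<^sub>R Y)" if "t \<in> {0..1}" for t
      using that a Y by (auto simp: nonneg_mat_def)
    show "y = 0" if t: "t \<in> {0..1}" and fixed: "(t * a) *\<^sub>R Y *v y = y" for t y
    proof (rule ccontr)
      assume "y \<noteq> 0"
      then have ta: "t * a \<noteq> 0" using fixed by auto
      have "Y *v y = (1 / (t * a)) *\<^sub>R ((t * a) *\<^sub>R (Y *v y))"
        using ta by simp
      also have "\<dots> = (1 / (t * a)) *s y"
        using fixed by (simp only: scaleR_matrix_vector_assoc scalar_mult_eq_scaleR)
      finally have "cmod (complex_of_real (1 / (t * a))) \<le> spectral_radius Y"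
        by (rule eigenvalue_le_spectral_radius[OF Y(1) is_eigenvalue_of_real[OF _ \<open>y \<noteq> 0\<close>]])
      then have "\<bar>1 / (t * a)\<bar> \<le> 1"
        using Y(2) by (simp only: norm_of_real)
      moreover have "\<bar>t * a\<bar> < 1"
        using t a mult_left_le_one_le[of a t] by auto
      ultimately show False using ta by (simp add: abs_mult divide_le_eq)
    qed
    show "strictly_subinvariant ((0 * a) *\<^sub>R Y)"
      unfolding strictly_subinvariant_def by (intro exI[of _ 1]) simp
  qed
  then show ?thesis by simp
qed

lemma strictly_subinvariant_segment:
  fixes A Z :: "real^'n^'n"
  assumes A: "nonneg_mat A" and Z: "nonneg_mat Z" "strictly_subinvariant Z"
    and lower: "\<And>h. s * norm h \<le> norm ((A - mat 1) *v h)" and close: "norm (A - Z) < s"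
  shows "strictly_subinvariant A"
proof -
  have "strictly_subinvariant ((\<lambda>t. Z + t *\<^sub>R (A - Z)) 1)"
  proof (rule strictly_subinvariant_homotopy)
    show "continuous_on {0..1} (\<lambda>t. Z + t *\<^sub>R (A - Z))" by (intro continuous_intros)
    show "nonneg_mat (Z + t *\<^sub>R (A - Z))" if "t \<in> {0..1}" for t
    proof -
      have "(Z + t *\<^sub>R (A - Z)) $ i $ j = (1 - t) * Z $ i $ j + t * A $ i $ j" for i j
        by (simp add: algebra_simps)
      then show ?thesis using that A Z by (auto simp: nonneg_mat_def)
    qed
    show "y = 0" if t: "t \<in> {0..1}" and fixed: "(Z + t *\<^sub>R (A - Z)) *v y = y" for t y
    proof (rule ccontr)
      assume "y \<noteq> 0"
      have "(A - mat 1) *v y = (1 - t) *\<^sub>R ((A - Z) *v y)"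
        using fixed by (simp add: algebra_simps matrix_vector_mult_diff_rdistrib
            matrix_vector_mult_add_rdistrib scaleR_matrix_vector_assoc)
      then have "s * norm y \<le> (1 - t) * norm ((A - Z) *v y)"
        using lower[of y] t by simp
      also have "\<dots> \<le> norm ((A - Z) *v y)"
        using t by (intro mult_left_le_one_le) auto
      also have "\<dots> \<le> norm (A - Z) * norm y" by (rule norm_matrix_vector_mult_le)
      also have "\<dots> < s * norm y" using close \<open>y \<noteq> 0\<close> by simp
      finally show False by simp
    qed
    show "strictly_subinvariant (Z + 0 *\<^sub>R (A - Z))" using Z(2) by simp
  qed
  then show ?thesis by simp
qed

text \<open>With s the smallest singular value of A - I: shrink a closer feasible Y slightly and move
  it along a segment to A; strict subinvariance survives, contradicting rho(A) > 1.\<close>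
lemma feasible_distance_ge:
  fixes A Y :: "real^'n^'n"
  assumes A: "nonneg_mat A" "spectral_radius A > 1"
    and lower: "\<And>h. s * norm h \<le> norm ((A - mat 1) *v h)" and Y: "feasible Y"
  shows "s \<le> norm (Y - A)"
proof (rule ccontr)
  assume "\<not> s \<le> norm (Y - A)"
  have "((\<lambda>a. norm (A - a *\<^sub>R Y)) \<longlongrightarrow> norm (A - 1 *\<^sub>R Y)) (at_left 1)"
    by (intro tendsto_intros)
  then have "\<forall>\<^sub>F a in at_left 1. norm (A - a *\<^sub>R Y) < s"
    using \<open>\<not> s \<le> norm (Y - A)\<close> by (auto simp: norm_minus_commute intro: order_tendstoD)
  moreover have "\<forall>\<^sub>F a in at_left (1::real). 0 < a \<and> a < 1"
    by (intro eventually_at_leftI[of 0]) auto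
  ultimately obtain a where a: "0 < a" "a < 1" "norm (A - a *\<^sub>R Y) < s"
    using eventually_happens'[OF trivial_limit_at_left_real eventually_conj] by blast
  have Y': "nonneg_mat Y" "spectral_radius Y \<le> 1" using Y by (auto simp: feasible_def)
  have "nonneg_mat (a *\<^sub>R Y)" using Y'(1) a by (simp add: nonneg_mat_def)
  then have "strictly_subinvariant A"
    using strictly_subinvariant_segment[OF A(1) _ strictly_subinvariant_scaleR[OF Y' less_imp_le a(2)]
        lower a(3)] a by simp
  then show False
    using spectral_radius_le_1_if_strictly_subinvariant A by fastforce
qed

lemma inner_transpose_matrix_vector: "(transpose B *v y) \<bullet> x = y \<bullet> ((B::real^'n^'m) *v x)"
  by (metis dot_lmul_matrix transpose_matrix_vector)

lemma tendsto_outer: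
  fixes a b :: "'a \<Rightarrow> real^'n"
  assumes "(a \<longlongrightarrow> a0) F" and "(b \<longlongrightarrow> b0) F"
  shows "((\<lambda>t. outer (a t) (b t)) \<longlongrightarrow> outer a0 b0) F"
  unfolding outer_def by (intro tendsto_vec_lambda tendsto_mult tendsto_vec_nth assms)

lemma local_min_eventually:
  assumes "local_min A X" and "(Y \<longlongrightarrow> X) F" and "\<forall>\<^sub>F t in F. feasible (Y t)"
  shows "\<forall>\<^sub>F t in F. norm (X - A) \<le> norm (Y t - A)"
proof -
  from assms(1) obtain e where "e > 0"
    and e: "\<And>Z. feasible Z \<Longrightarrow> dist Z X < e \<Longrightarrow> norm (X - A) \<le> norm (Z - A)"
    unfolding local_min_def by blast
  have "\<forall>\<^sub>F t in F. dist (Y t) X < e" using assms(2) \<open>e > 0\<close> by (rule tendstoD)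
  with assms(3) show ?thesis by eventually_elim (use e in blast)
qed

lemma eventually_pos_mat:
  fixes Y :: "'a \<Rightarrow> real^'n^'n"
  assumes "(Y \<longlongrightarrow> X) F" and "pos_mat X"
  shows "\<forall>\<^sub>F t in F. pos_mat (Y t)"
proof -
  have "\<forall>\<^sub>F t in F. Y t $ i $ j > 0" for i j
    by (rule order_tendstoD(1)[OF tendsto_vec_nth[OF tendsto_vec_nth[OF assms(1)]]])
      (use assms(2) in \<open>simp add: pos_mat_def\<close>)
  then show ?thesis unfolding pos_mat_def by (simp add: eventually_all_finite)
qed

lemma eventually_pos_vec:
  fixes w :: "'a \<Rightarrow> real^'n"
  assumes "(w \<longlongrightarrow> v) F" and "\<And>i. v$i > 0"
  shows "\<forall>\<^sub>F t in F. \<forall>i. w t $ i > 0"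
proof -
  have "\<forall>\<^sub>F t in F. w t $ i > 0" for i
    by (rule order_tendstoD(1)[OF tendsto_vec_nth[OF assms(1)] assms(2)])
  then show ?thesis by (simp add: eventually_all_finite)
qed

lemma quadratic_nonneg_near_0:
  fixes a b :: real
  assumes "\<forall>\<^sub>F s in at 0. a * s + b * s^2 \<ge> 0"
  shows "a = 0" and "b \<ge> 0"
proof -
  have right: "\<forall>\<^sub>F s in at_right 0. 0 \<le> s * (a + b * s) \<and> 0 < s"
    using assms eventually_at_right_less[of 0]
    by (auto simp: eventually_at_split algebra_simps power2_eq_square elim: eventually_elim2)
  have "\<forall>\<^sub>F s in at_left (0::real). s < 0"
    by (simp add: eventually_at_filter)
  then have left: "\<forall>\<^sub>F s in at_left 0. 0 \<le> s * (a + b * s) \<and> s < 0"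
    using assms
    by (auto simp: eventually_at_split algebra_simps power2_eq_square elim: eventually_elim2)
  have "a \<ge> 0"
    using right by (intro tendsto_lowerbound[of "\<lambda>s. a + b * s" _ "at_right 0"])
      (auto intro!: tendsto_eq_intros elim!: eventually_mono simp: zero_le_mult_iff)
  moreover have "a \<le> 0"
    using left by (intro tendsto_upperbound[of "\<lambda>s. a + b * s" _ "at_left 0"])
      (auto intro!: tendsto_eq_intros elim!: eventually_mono simp: zero_le_mult_iff)
  ultimately show "a = 0" by simp
  then obtain s where "0 \<le> s * (b * s)" "0 < s"
    using eventually_happens'[OF trivial_limit_at_right_real right] by auto
  then show "b \<ge> 0" by (simp add: zero_le_mult_iff)
qed

lemma eventually_norm_descent:
  fixes D E :: "'a::real_inner"
  assumes "D \<bullet> E = E \<bullet> E" and "E \<noteq> 0"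
  shows "\<forall>\<^sub>F t in at_right 0. norm (t *\<^sub>R E - D) < norm D"
proof -
  have "\<forall>\<^sub>F t in at_right (0::real). t < 1"
    by (rule order_tendstoD(2)[OF tendsto_ident_at]) simp
  with eventually_at_right_less[of 0]
  show ?thesis
  proof eventually_elim
    case (elim t)
    have "norm (t *\<^sub>R E - D)^2 = (t *\<^sub>R E - D) \<bullet> (t *\<^sub>R E - D)"
      by (simp add: power2_norm_eq_inner)
    also have "\<dots> = D \<bullet> D - (2 * t - t^2) * (E \<bullet> E)"
      using assms(1) by (simp add: inner_diff_left inner_diff_right inner_commute[of E D]
          power2_eq_square algebra_simps)
    also have "\<dots> < D \<bullet> D"
      using elim assms(2) by (simp add: power2_eq_square)
    also have "\<dots> = norm D ^ 2"
      by (simp add: power2_norm_eq_inner)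
    finally show ?case by (rule power2_less_imp_less) simp
  qed
qed

text \<open>A local minimiser v of the Rayleigh quotient |B w|^2 / |w|^2 is an eigenvector of
  B^T B for the global minimum of the quotient: along w = v + s h the defect
  |B w|^2 - |B v|^2 |w|^2 is a quadratic in s with no constant term.\<close>
lemma rayleigh_local_min_eigenvector:
  fixes B :: "real^'n^'n"
  assumes v: "norm v = 1"
    and loc: "\<And>h. \<forall>\<^sub>F s in at 0.
      norm (B *v v)^2 * norm (v + s *\<^sub>R h)^2 \<le> norm (B *v (v + s *\<^sub>R h))^2"
  shows "transpose B *v (B *v v) = norm (B *v v)^2 *\<^sub>R v"
    and "norm (B *v v) * norm h \<le> norm (B *v h)"
proof -
  define \<mu> where "\<mu> = norm (B *v v)^2"
  have vv: "v \<bullet> v = 1" using v by (simp add: power2_norm_eq_inner[symmetric])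
  have quad: "\<forall>\<^sub>F s in at 0. (2 * ((B *v v) \<bullet> (B *v h)) - 2 * \<mu> * (v \<bullet> h)) * s
      + ((B *v h) \<bullet> (B *v h) - \<mu> * (h \<bullet> h)) * s^2 \<ge> 0" for h
    using loc[of h]
  proof eventually_elim
    case (elim s)
    have "B *v (v + s *\<^sub>R h) = B *v v + s *\<^sub>R (B *v h)"
      by (simp add: matrix_vector_right_distrib matrix_vector_mult_scaleR)
    then have "norm (B *v (v + s *\<^sub>R h))^2
        = \<mu> + 2 * s * ((B *v v) \<bullet> (B *v h)) + s^2 * ((B *v h) \<bullet> (B *v h))"
      unfolding \<mu>_def power2_norm_eq_inner by (simp add: inner_add_left inner_add_right inner_commute
          power2_eq_square algebra_simps)
    moreover have "norm (v + s *\<^sub>R h)^2 = 1 + 2 * s * (v \<bullet> h) + s^2 * (h \<bullet> h)"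
      unfolding power2_norm_eq_inner by (simp add: inner_add_left inner_add_right vv inner_commute
          power2_eq_square algebra_simps)
    ultimately show ?case
      using elim by (simp add: \<mu>_def algebra_simps)
  qed
  have first: "(B *v v) \<bullet> (B *v h) = \<mu> * (v \<bullet> h)" for h
    using quadratic_nonneg_near_0(1)[OF quad[of h]] by simp
  define q where "q = transpose B *v (B *v v) - \<mu> *\<^sub>R v"
  have "q \<bullet> q = (transpose B *v (B *v v)) \<bullet> q - \<mu> * (v \<bullet> q)"
    by (simp only: q_def inner_diff_left inner_scaleR_left)
  also have "(transpose B *v (B *v v)) \<bullet> q = (B *v v) \<bullet> (B *v q)"
    by (rule inner_transpose_matrix_vector)
  finally have "q = 0" using first[of q] by (simp add: inner_commute)
  then show "transpose B *v (B *v v) = norm (B *v v)^2 *\<^sub>R v"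
    by (simp add: q_def \<mu>_def)
  have "\<mu> * (h \<bullet> h) \<le> (B *v h) \<bullet> (B *v h)"
    using quadratic_nonneg_near_0(2)[OF quad[of h]] by simp
  then have "(norm (B *v v) * norm h)^2 \<le> norm (B *v h)^2"
    by (simp add: \<mu>_def power_mult_distrib power2_norm_eq_inner)
  then show "norm (B *v v) * norm h \<le> norm (B *v h)"
    by (rule power2_le_imp_le) simp
qed

lemma smallest_eigenvalue_transpose_mult:
  fixes B :: "real^'n^'n"
  assumes "v \<noteq> 0" and "transpose B *v (B *v v) = \<mu> *s v"
    and lower: "\<And>h. \<mu> * (h \<bullet> h) \<le> (B *v h) \<bullet> (B *v h)"
  shows "smallest_eigenvalue (transpose B ** B) \<mu>"
  unfolding smallest_eigenvalue_def
proof (intro conjI allI impI)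
  show "\<exists>v. v \<noteq> 0 \<and> (transpose B ** B) *v v = \<mu> *s v"
    using assms(1,2) by (auto simp: matrix_vector_mul_assoc[symmetric] simp del: transpose_matrix_vector)
  fix l x assume x: "x \<noteq> 0 \<and> (transpose B ** B) *v x = l *s x"
  have "\<mu> * (x \<bullet> x) \<le> x \<bullet> ((transpose B ** B) *v x)"
    using lower[of x] by (simp add: matrix_vector_mul_assoc[symmetric] dot_lmul_matrix[symmetric]
        inner_commute)
  also have "\<dots> = l * (x \<bullet> x)" using x by (simp add: scalar_mult_eq_scaleR)
  finally show "\<mu> \<le> l" using x by simp
qed

lemma smallest_eigenvalue_mult_transpose:
  fixes B :: "real^'n^'n"
  assumes B: "invertible B" and \<mu>: "smallest_eigenvalue (transpose B ** B) \<mu>"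
  shows "smallest_eigenvalue (B ** transpose B) \<mu>"
  unfolding smallest_eigenvalue_def
proof (intro conjI allI impI)
  have inj: "C *v y = 0 \<Longrightarrow> y = 0" if "invertible C" for C :: "real^'n^'n" and y
    using that invertible_left_inverse matrix_left_invertible_ker by blast
  obtain x where x: "x \<noteq> 0" "(transpose B ** B) *v x = \<mu> *s x"
    using \<mu> unfolding smallest_eigenvalue_def by blast
  have "B *v x \<noteq> 0" using inj[OF B] x(1) by blast
  moreover have "(B ** transpose B) *v (B *v x) = \<mu> *s (B *v x)"
    using x(2) by (metis matrix_vector_mul_assoc matrix_mul_assoc vector_scalar_commute)
  ultimately show "\<exists>y. y \<noteq> 0 \<and> (B ** transpose B) *v y = \<mu> *s y" by blast
  fix l y assume y: "y \<noteq> 0 \<and> (B ** transpose B) *v y = l *s y"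
  have "transpose B *v y \<noteq> 0"
    using inj[OF transpose_invertible[OF B]] y by blast
  moreover have "(transpose B ** B) *v (transpose B *v y) = l *s (transpose B *v y)"
    using y by (metis matrix_vector_mul_assoc matrix_mul_assoc vector_scalar_commute)
  ultimately show "\<mu> \<le> l"
    using \<mu> unfolding smallest_eigenvalue_def by blast
qed

locale positive_local_min =
  fixes A X :: "real^'n^'n" and v z :: "real^'n" and \<mu> :: real
  assumes rho_A: "spectral_radius A > 1" and pos_X: "pos_mat X" and local_min: "local_min A X"
    and leading: "right_leading_eigvec X v" and unit: "norm v = 1"
  defines "z \<equiv> (A - mat 1) *v v" and "\<mu> \<equiv> norm z ^ 2"
begin

lemma feasible_X: "feasible X"
  using local_min by (simp add: local_min_def)

lemma v_pos: "v$i > 0"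
  using leading pos_mat_nonneg_eigenvector_pos[OF pos_X] by (auto simp: right_leading_eigvec_def)

lemma inner_v_v: "v \<bullet> v = 1"
  using unit by (simp add: power2_norm_eq_inner[symmetric])

lemma A_ne_X: "A \<noteq> X"
  using rho_A feasible_X by (auto simp: feasible_def)

text \<open>X + t E would be a feasible point closer to A.\<close>
lemma no_feasible_descent:
  assumes "E \<noteq> 0" and "(A - X) \<bullet> E = E \<bullet> E"
    and sub: "\<forall>\<^sub>F t in at_right 0. \<forall>i. ((X + t *\<^sub>R E) *v v)$i \<le> v$i"
  shows False
proof -
  have lim: "((\<lambda>t. X + t *\<^sub>R E) \<longlongrightarrow> X) (at_right 0)"
    by (auto intro!: tendsto_eq_intros)
  have "\<forall>\<^sub>F t in at_right 0. feasible (X + t *\<^sub>R E)"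
    using eventually_pos_mat[OF lim pos_X] sub
  proof eventually_elim
    case (elim t)
    then have "spectral_radius (X + t *\<^sub>R E) \<le> 1"
      using v_pos by (intro spectral_radius_le_subinvariant) (auto simp: pos_mat_imp_nonneg_mat)
    with elim show ?case by (simp add: feasible_def pos_mat_imp_nonneg_mat)
  qed
  from local_min_eventually[OF local_min lim this] eventually_norm_descent[OF assms(2,1)]
  have "\<forall>\<^sub>F t in at_right (0::real). False"
    by eventually_elim (simp add: norm_minus_commute algebra_simps)
  then show False by (simp add: trivial_limit_at_right_real)
qed

lemma distance_rank_one: "A - X = outer ((A - X) *v v) v"
proof (rule ccontr)
  define E where "E = (A - X) - outer ((A - X) *v v) v"
  assume "A - X \<noteq> outer ((A - X) *v v) v"
  then have "E \<noteq> 0" by (simp add: E_def)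
  have Ev: "E *v v = 0"
    by (simp add: E_def matrix_vector_mult_diff_rdistrib outer_mult_vec inner_v_v)
  have "(A - X) \<bullet> E = (E + outer ((A - X) *v v) v) \<bullet> E" by (simp add: E_def)
  also have "\<dots> = E \<bullet> E" by (simp add: inner_add_left inner_outer Ev)
  finally have "(A - X) \<bullet> E = E \<bullet> E" .
  moreover have "((X + t *\<^sub>R E) *v v)$i \<le> v$i" for t i
  proof -
    have "((X + t *\<^sub>R E) *v v)$i = spectral_radius X * v$i"
      using leading by (simp add: right_leading_eigvec_def matrix_vector_mult_add_rdistrib
          scaleR_matrix_vector_assoc[symmetric] Ev)
    also have "\<dots> \<le> v$i"
      using feasible_X v_pos[of i] by (simp add: feasible_def mult_left_le_one_le less_imp_le)
    finally show ?thesis .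
  qed
  ultimately show False
    using no_feasible_descent[OF \<open>E \<noteq> 0\<close>] by simp
qed

lemma spectral_radius_X: "spectral_radius X = 1"
proof (rule ccontr)
  define \<rho> where "\<rho> = spectral_radius X"
  assume "spectral_radius X \<noteq> 1"
  then have "\<rho> < 1" using feasible_X by (simp add: feasible_def \<rho>_def)
  have lt: "\<forall>\<^sub>F t in at_right 0. ((X + t *\<^sub>R (A - X)) *v v)$i < v$i" for i
  proof -
    have "((X + t *\<^sub>R (A - X)) *v v)$i = \<rho> * v$i + t * ((A - X) *v v)$i" for t
      using leading by (simp add: right_leading_eigvec_def matrix_vector_mult_add_rdistrib
          scaleR_matrix_vector_assoc[symmetric] \<rho>_def)
    moreover have "((\<lambda>t. \<rho> * v$i + t * ((A - X) *v v)$i) \<longlongrightarrow> \<rho> * v$i) (at_right 0)"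
      by (auto intro!: tendsto_eq_intros)
    ultimately show ?thesis
      using \<open>\<rho> < 1\<close> v_pos[of i] by (auto intro: order_tendstoD)
  qed
  have "\<forall>\<^sub>F t in at_right 0. \<forall>i. ((X + t *\<^sub>R (A - X)) *v v)$i < v$i"
    using lt by (simp add: eventually_all_finite)
  then have "\<forall>\<^sub>F t in at_right 0. \<forall>i. ((X + t *\<^sub>R (A - X)) *v v)$i \<le> v$i"
    by eventually_elim (simp add: less_imp_le)
  moreover have "A - X \<noteq> 0" using A_ne_X by simp
  ultimately show False
    using no_feasible_descent by blast
qed

lemma X_eq: "X = A - outer z v"
proof -
  have "(A - X) *v v = z"
    using leading spectral_radius_X
    by (simp add: z_def right_leading_eigvec_def matrix_vector_mult_diff_rdistrib)
  then have "A - X = outer z v" using distance_rank_one by simp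
  then show ?thesis by (simp add: algebra_simps)
qed

lemma z_nonzero: "z \<noteq> 0"
  using X_eq A_ne_X by (auto simp: outer_def vec_eq_iff)

lemma norm_X_minus_A: "norm (X - A) = sqrt \<mu>"
  using unit by (simp add: X_eq \<mu>_def norm_outer)

lemma z_nonneg: "nonneg_vec z"
proof (rule ccontr)
  define e where "e = (\<chi> i. min (z$i) 0)"
  assume "\<not> nonneg_vec z"
  then obtain i where "z$i < 0" by (auto simp: nonneg_vec_def not_le)
  then have "e$i \<noteq> 0" by (simp add: e_def)
  then have "e \<noteq> 0" by auto
  have "z \<bullet> e = e \<bullet> e"
    unfolding inner_vec_def e_def by (intro sum.cong) (auto simp: min_def)
  then have "(A - X) \<bullet> outer e v = outer e v \<bullet> outer e v"
    using X_eq by (simp add: inner_outer_outer inner_v_v)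
  moreover have "outer e v \<noteq> 0"
    using \<open>e \<noteq> 0\<close> unit norm_outer[of e v] by auto
  moreover have "\<forall>\<^sub>F t in at_right 0. \<forall>i. ((X + t *\<^sub>R outer e v) *v v)$i \<le> v$i"
    using eventually_at_right_less[of 0]
  proof eventually_elim
    case (elim t)
    have "((X + t *\<^sub>R outer e v) *v v)$i = v$i + t * min (z$i) 0" for i
      using leading spectral_radius_X
      by (simp add: right_leading_eigvec_def matrix_vector_mult_add_rdistrib
          scaleR_matrix_vector_assoc[symmetric] outer_mult_vec inner_v_v e_def)
    then show ?case using elim by (simp add: mult_nonneg_nonpos)
  qed
  ultimately show False using no_feasible_descent by blast
qed

lemma rayleigh_quotient_local_min:
  "\<forall>\<^sub>F s in at 0. norm ((A - mat 1) *v v)^2 * norm (v + s *\<^sub>R h)^2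
      \<le> norm ((A - mat 1) *v (v + s *\<^sub>R h))^2"
proof -
  define w where "w s = v + s *\<^sub>R h" for s :: real
  define Y where "Y s = A - (1 / norm (w s)^2) *\<^sub>R outer ((A - mat 1) *v w s) (w s)" for s
  have w_lim: "(w \<longlongrightarrow> v) (at 0)" unfolding w_def by (auto intro!: tendsto_eq_intros)
  have Bw_lim: "((\<lambda>s. (A - mat 1) *v w s) \<longlongrightarrow> z) (at 0)"
    unfolding z_def by (rule bounded_linear.tendsto[OF matrix_vector_mul_bounded_linear w_lim])
  have "(Y \<longlongrightarrow> A - (1 / norm v^2) *\<^sub>R outer z v) (at 0)"
    unfolding Y_def using unit
    by (intro tendsto_diff tendsto_const tendsto_scaleR tendsto_divide tendsto_power tendsto_norm
        tendsto_outer Bw_lim w_lim) auto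
  then have Y_lim: "(Y \<longlongrightarrow> X) (at 0)" using X_eq unit by simp
  have ev: "\<forall>\<^sub>F s in at 0. feasible (Y s) \<and> (\<forall>i. w s $ i > 0)"
    using eventually_pos_mat[OF Y_lim pos_X] eventually_pos_vec[OF w_lim v_pos]
  proof eventually_elim
    case (elim s)
    then have "w s \<noteq> 0" by (metis zero_index less_irrefl)
    then have "Y s *v w s = w s"
      by (simp add: Y_def matrix_vector_mult_diff_rdistrib scaleR_matrix_vector_assoc[symmetric]
          outer_mult_vec power2_norm_eq_inner scalar_mult_eq_scaleR)
    then have "spectral_radius (Y s) \<le> 1"
      using elim by (intro spectral_radius_le_subinvariant) (auto simp: pos_mat_imp_nonneg_mat)
    then show ?case using elim by (simp add: feasible_def pos_mat_imp_nonneg_mat)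
  qed
  then have "\<forall>\<^sub>F s in at 0. feasible (Y s)"
    by eventually_elim simp
  note local_min_eventually[OF local_min Y_lim this]
  with ev have "\<forall>\<^sub>F s in at 0.
      norm ((A - mat 1) *v v)^2 * norm (w s)^2 \<le> norm ((A - mat 1) *v w s)^2"
  proof eventually_elim
    case (elim s)
    then have "w s \<noteq> 0" by (metis zero_index less_irrefl)
    have "norm (Y s - A) = norm ((A - mat 1) *v w s) / norm (w s)"
      using \<open>w s \<noteq> 0\<close> by (simp add: Y_def norm_outer power2_eq_square)
    then have "norm ((A - mat 1) *v v) * norm (w s) \<le> norm ((A - mat 1) *v w s)"
      using elim norm_X_minus_A \<open>w s \<noteq> 0\<close> by (simp add: \<mu>_def z_def pos_le_divide_eq)
    then have "(norm ((A - mat 1) *v v) * norm (w s))^2 \<le> norm ((A - mat 1) *v w s)^2"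
      by (rule power_mono) simp
    then show ?case by (simp add: power_mult_distrib)
  qed
  then show ?thesis by (simp add: w_def)
qed

end

lemma transpose_minus_mat_1: "transpose (A - mat 1) = transpose A - (mat 1 :: 'a::ring_1^'n^'n)"
  by (simp add: transpose_def mat_def vec_eq_iff)

lemma neg_matrix_mult_neg: "(- P) ** (- Q) = P ** (Q :: 'a::ring_1^'n^'n)"
  by (simp add: matrix_matrix_mult_def vec_eq_iff)

lemma mat_1_minus_gram:
  fixes A :: "real^'n^'n"
  shows "(mat 1 - transpose A) ** (mat 1 - A) = transpose (A - mat 1) ** (A - mat 1)"
    and "(mat 1 - A) ** (mat 1 - transpose A) = (A - mat 1) ** transpose (A - mat 1)"
  using neg_matrix_mult_neg[of "A - mat 1" "transpose A - mat 1"]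
    neg_matrix_mult_neg[of "transpose A - mat 1" "A - mat 1"]
  by (simp_all add: transpose_minus_mat_1)

context positive_local_min
begin

lemma gram_eigenvector: "transpose (A - mat 1) *v z = \<mu> *s v"
  using rayleigh_local_min_eigenvector(1)[OF unit rayleigh_quotient_local_min]
  by (simp add: z_def \<mu>_def scalar_mult_eq_scaleR)

lemma singular_value_bound: "sqrt \<mu> * norm h \<le> norm ((A - mat 1) *v h)"
  using rayleigh_local_min_eigenvector(2)[OF unit rayleigh_quotient_local_min] by (simp add: \<mu>_def z_def)

lemma mu_pos: "\<mu> > 0"
  using z_nonzero by (simp add: \<mu>_def)

lemma invertible_A_minus_1: "invertible (A - mat 1)"
proof -
  have "h = 0" if "(A - mat 1) *v h = 0" for h
    using singular_value_bound[of h] mu_pos that by (simp add: mult_le_0_iff)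
  then show ?thesis
    using matrix_left_invertible_ker invertible_left_inverse by blast
qed

lemma smallest_eigenvalue_M: "smallest_eigenvalue (transpose (A - mat 1) ** (A - mat 1)) \<mu>"
proof (rule smallest_eigenvalue_transpose_mult)
  show "v \<noteq> 0" using unit by auto
  show "transpose (A - mat 1) *v ((A - mat 1) *v v) = \<mu> *s v"
    using gram_eigenvector by (simp add: z_def del: transpose_matrix_vector)
  show "\<mu> * (h \<bullet> h) \<le> ((A - mat 1) *v h) \<bullet> ((A - mat 1) *v h)" for h
  proof -
    have "(sqrt \<mu> * norm h)^2 \<le> norm ((A - mat 1) *v h)^2"
      by (rule power_mono[OF singular_value_bound]) (use mu_pos in simp)
    then show ?thesis
      using mu_pos by (simp add: power_mult_distrib power2_norm_eq_inner)
  qed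
qed

lemma M_eigenvector: "(transpose (A - mat 1) ** (A - mat 1)) *v v = \<mu> *s v"
  using gram_eigenvector by (simp add: z_def matrix_vector_mul_assoc[symmetric] del: transpose_matrix_vector)

lemma smallest_eigenvalue_N: "smallest_eigenvalue ((A - mat 1) ** transpose (A - mat 1)) \<mu>"
  by (rule smallest_eigenvalue_mult_transpose[OF invertible_A_minus_1 smallest_eigenvalue_M])

lemma N_eigenvector: "((A - mat 1) ** transpose (A - mat 1)) *v z = \<mu> *s z"
  using gram_eigenvector
  by (simp add: z_def matrix_vector_mul_assoc[symmetric] vector_scalar_commute del: transpose_matrix_vector)

lemma left_leading_eigvec: "left_leading_eigvec X ((1 / sqrt \<mu>) *s z)"
proof -
  have "z v* X = z v* A - z v* outer z v"
    using X_eq by (simp add: vector_matrix_mult_diff_rdistrib)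
  also have "z v* A = transpose (A - mat 1) *v z + z"
    by (simp add: transpose_minus_mat_1 matrix_vector_mult_diff_rdistrib)
  also have "z v* outer z v = \<mu> *s v"
    by (simp add: vec_mult_outer \<mu>_def power2_norm_eq_inner)
  finally have "z v* X = z"
    using gram_eigenvector by simp
  then show ?thesis
    using z_nonneg z_nonzero mu_pos spectral_radius_X
    by (auto simp: left_leading_eigvec_def nonneg_vec_def scalar_vector_matrix_assoc)
qed

lemma global_min: "nonneg_mat A \<Longrightarrow> global_min A X"
  using feasible_distance_ge[OF _ rho_A singular_value_bound] feasible_X norm_X_minus_A
  by (simp add: global_min_def)

end

context positive_local_min
begin

lemma characterisation:
  "\<exists>\<mu>. smallest_eigenvalue ((mat 1 - transpose A) ** (mat 1 - A)) \<mu> \<and>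
     ((mat 1 - transpose A) ** (mat 1 - A)) *v v = \<mu> *s v \<and> \<mu> > 0 \<and>
     (\<forall>u. u = (1 / sqrt \<mu>) *s z \<longrightarrow> left_leading_eigvec X u \<and>
        (\<exists>\<nu>. smallest_eigenvalue ((mat 1 - A) ** (mat 1 - transpose A)) \<nu> \<and>
           ((mat 1 - A) ** (mat 1 - transpose A)) *v u = \<nu> *s u)) \<and>
     X = A - outer z v \<and> norm (X - A) = sqrt \<mu>"
  unfolding mat_1_minus_gram
  using smallest_eigenvalue_M M_eigenvector mu_pos left_leading_eigvec smallest_eigenvalue_N
    N_eigenvector X_eq norm_X_minus_A
  by (intro exI[of _ \<mu>]) (auto simp: vector_scalar_commute)

lemma nonneg_solution:
  "\<exists>\<mu> w. smallest_eigenvalue ((mat 1 - transpose A) ** (mat 1 - A)) \<mu> \<and>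
     ((mat 1 - transpose A) ** (mat 1 - A)) *v w = \<mu> *s w \<and> nonneg_vec w \<and> norm w = 1 \<and>
     nonneg_vec ((A - mat 1) *v w) \<and> nonneg_mat (A - outer ((A - mat 1) *v w) w)"
  unfolding mat_1_minus_gram
  using smallest_eigenvalue_M M_eigenvector leading unit z_nonneg X_eq pos_X
  by (intro exI[of _ \<mu>] exI[of _ v])
    (auto simp: right_leading_eigvec_def z_def pos_mat_imp_nonneg_mat)

end

theorem theorem4:
  fixes A :: "real^'n^'n"
  assumes "nonneg_mat A" and "irreducible_mat A" and "spectral_radius A > 1"
  defines "M \<equiv> (mat 1 - transpose A) ** (mat 1 - A)"
      and "N \<equiv> (mat 1 - A) ** (mat 1 - transpose A)"
  shows "(\<forall>X. pos_mat X \<and> local_min A X \<longrightarrow>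
            global_min A X \<and>
            (\<forall>v. right_leading_eigvec X v \<and> norm v = 1 \<longrightarrow>
               (\<exists>\<mu>. smallest_eigenvalue M \<mu> \<and> M *v v = \<mu> *s v \<and> \<mu> > 0 \<and>
                  (\<forall>u. u = (1 / sqrt \<mu>) *s ((A - mat 1) *v v) \<longrightarrow>
                     left_leading_eigvec X u \<and>
                     (\<exists>\<nu>. smallest_eigenvalue N \<nu> \<and> N *v u = \<nu> *s u)) \<and>
                  X = A - outer ((A - mat 1) *v v) v \<and>
                  norm (X - A) = sqrt \<mu>)))
         \<and> ((\<not> (\<exists>\<mu> v. smallest_eigenvalue M \<mu> \<and> M *v v = \<mu> *s v \<and> nonneg_vec v \<and> norm v = 1 \<and>
                  nonneg_vec ((A - mat 1) *v v) \<and>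
                  nonneg_mat (A - outer ((A - mat 1) *v v) v)))
            \<longrightarrow> \<not> (\<exists>X. pos_mat X \<and> local_min A X))"
proof -
  have loc: "positive_local_min A X v"
    if "pos_mat X \<and> local_min A X" and "right_leading_eigvec X v \<and> norm v = 1" for X v
    using assms(3) that by unfold_locales auto
  have "global_min A X" if "pos_mat X \<and> local_min A X" for X
    using pos_mat_unit_leading_eigvec that loc positive_local_min.global_min[OF _ assms(1)]
    by meson
  moreover note positive_local_min.characterisation[OF loc]
  moreover have "\<exists>\<mu> w. smallest_eigenvalue M \<mu> \<and> M *v w = \<mu> *s w \<and> nonneg_vec w \<and> norm w = 1 \<and>
      nonneg_vec ((A - mat 1) *v w) \<and> nonneg_mat (A - outer ((A - mat 1) *v w) w)"
    if "pos_mat X \<and> local_min A X" for X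
    using pos_mat_unit_leading_eigvec that loc positive_local_min.nonneg_solution
    unfolding M_def by meson
  ultimately show ?thesis
    unfolding M_def N_def by blast
qed

end
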